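(* Fix $\theta^* \in \mathbb{R}^n$ and let $\mathcal{T} \subseteq \mathbb{R}^n$ be a nonempty closed convex set such that the re-centered set $\{\theta - \Pi_{\mathcal{T}}(\theta^* ) : \theta \in \mathcal{T}\}$ is a polyhedral cone. Then there exists $r > 0$ such that $$\Pi_{\mathcal{T}}(u) - \Pi_{\mathcal{T}}(\theta^* ) \in (\theta^* - \Pi_{\mathcal{T}}(\theta^* ))^\perp \quad \text{for all } u \in B_r(\theta^* ).$$
   Context: $\Pi_{\mathcal{T}}$ is Euclidean projection onto $\mathcal{T}$; $B_r(x)$ is the closed Euclidean ball of radius $r$ about $x$; $v^\perp = \{w : \langle w, v\rangle = 0\}$. A polyhedral cone is a set $\{x : Ax \le 0\}$ for some matrix $A$. *)

theory Defs
  imports "HOL-Analysis.Analysis"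
begin

(* A polyhedral cone {x. A x <= 0}: the rows of A are given as a finite list of vectors. *)
definition polyhedral_cone :: "(real ^ 'n) set \<Rightarrow> bool" where
  "polyhedral_cone C \<longleftrightarrow> (\<exists>rows :: (real ^ 'n) list. C = {x. \<forall>a \<in> set rows. a \<bullet> x \<le> 0})"

(* Euclidean projection onto T is the library's closest_point T. *)

end

theory Submission
  imports Defs
begin

text \<open>
  Write \<open>p\<close> for the projection of \<open>\<theta>*\<close> and \<open>T = {y. \<forall>a\<in>A. a \<bullet> (y - p) \<le> 0}\<close>.
  The projection of any \<open>u\<close> onto \<open>T\<close> coincides with its projection onto the affine flat cut out
  by the constraints active at that projection. There are only finitely many such flats, and
  projection onto each of them is 1-Lipschitz; hence for \<open>u\<close> close to \<open>\<theta>*\<close> the relevant flat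
  also projects \<open>\<theta>*\<close> to \<open>p\<close>. The flat is symmetric about \<open>p\<close>, so \<open>\<theta>* - p\<close> is orthogonal
  to every direction in it, in particular to the displacement of the projection of \<open>u\<close>.
\<close>

lemma closest_point_eqI:
  fixes S :: "'a::euclidean_space set"
  assumes "convex S" "closed S" "x \<in> S" "\<forall>y\<in>S. (a - x) \<bullet> (y - x) \<le> 0"
  shows "closest_point S a = x"
proof (rule closest_point_unique[OF assms(1-3), symmetric], intro ballI)
  fix z assume z: "z \<in> S"
  have "(dist a z)^2 = (norm ((a - x) - (z - x)))^2" by (simp add: dist_norm)
  also have "\<dots> = (norm (a - x))^2 - 2 * ((a - x) \<bullet> (z - x)) + (norm (z - x))^2"
    by (simp add: power2_norm_eq_inner inner_diff_left inner_diff_right inner_commute)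
  also have "\<dots> \<ge> (norm (a - x))^2" using assms(4) z
    by (smt (verit, best) zero_le_power2)
  finally have "(dist a x)^2 \<le> (dist a z)^2" by (simp add: dist_norm)
  then show "dist a x \<le> dist a z" by (simp add: power2_le_iff_abs_le)
qed

lemma closest_point_inner_eq_0_if_reflection_mem:
  fixes S :: "'a::euclidean_space set"
  assumes "convex S" "closed S" "q \<in> S" "2 *\<^sub>R closest_point S a - q \<in> S"
  shows "(a - closest_point S a) \<bullet> (q - closest_point S a) = 0"
proof -
  let ?p = "closest_point S a"
  have "(a - ?p) \<bullet> (q - ?p) \<le> 0"
    using closest_point_dot[OF assms(1-3)] .
  moreover have "(a - ?p) \<bullet> (2 *\<^sub>R ?p - q - ?p) \<le> 0"
    using closest_point_dot[OF assms(1,2,4)] .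
  moreover have "(a - ?p) \<bullet> (2 *\<^sub>R ?p - q - ?p) = - ((a - ?p) \<bullet> (q - ?p))"
    by (simp add: inner_diff_right scaleR_2)
  ultimately show ?thesis by linarith
qed

definition polyhedral_cone_at :: "'a::real_inner \<Rightarrow> 'a set \<Rightarrow> 'a set" where
  "polyhedral_cone_at p A = {y. \<forall>a\<in>A. a \<bullet> (y - p) \<le> 0}"

definition constraint_flat :: "'a::real_inner \<Rightarrow> 'a set \<Rightarrow> 'a set" where
  "constraint_flat p J = {y. \<forall>a\<in>J. a \<bullet> (y - p) = 0}"

definition active_constraints :: "'a::real_inner \<Rightarrow> 'a set \<Rightarrow> 'a \<Rightarrow> 'a set" where
  "active_constraints p A q = {a\<in>A. a \<bullet> (q - p) = 0}"

lemma polyhedral_cone_at_eq_INT: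
  "polyhedral_cone_at p A = (\<Inter>a\<in>A. {y. a \<bullet> y \<le> a \<bullet> p})"
  by (auto simp: polyhedral_cone_at_def inner_diff_right)

lemma closed_polyhedral_cone_at: "closed (polyhedral_cone_at p A)"
  unfolding polyhedral_cone_at_eq_INT by (intro closed_INT ballI closed_halfspace_le)

lemma convex_polyhedral_cone_at: "convex (polyhedral_cone_at p A)"
  unfolding polyhedral_cone_at_eq_INT by (intro convex_INT ballI convex_halfspace_le)

lemma base_mem_polyhedral_cone_at: "p \<in> polyhedral_cone_at p A"
  by (simp add: polyhedral_cone_at_def)

lemma constraint_flat_eq_INT:
  "constraint_flat p J = (\<Inter>a\<in>J. {y. a \<bullet> y = a \<bullet> p})"
  by (auto simp: constraint_flat_def inner_diff_right)

lemma closed_constraint_flat: "closed (constraint_flat p J)"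
  unfolding constraint_flat_eq_INT by (intro closed_INT ballI closed_hyperplane)

lemma convex_constraint_flat: "convex (constraint_flat p J)"
  unfolding constraint_flat_eq_INT by (intro convex_INT ballI convex_hyperplane)

lemma base_mem_constraint_flat: "p \<in> constraint_flat p J"
  by (simp add: constraint_flat_def)

lemma reflection_mem_constraint_flat:
  "q \<in> constraint_flat p J \<Longrightarrow> 2 *\<^sub>R p - q \<in> constraint_flat p J"
  by (auto simp: constraint_flat_def inner_diff_right algebra_simps scaleR_2)

lemma mem_constraint_flat_active_constraints:
  "q \<in> constraint_flat p (active_constraints p A q)"
  by (simp add: constraint_flat_def active_constraints_def)

text \<open>Inactive constraints hold strictly at \<open>q\<close>, so they survive a short step in any direction.\<close>

lemma polyhedral_cone_at_step_into_active_flat: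
  assumes "finite A" "q \<in> polyhedral_cone_at p A"
    and "y \<in> constraint_flat p (active_constraints p A q)"
  shows "\<exists>t>0. q + t *\<^sub>R (y - q) \<in> polyhedral_cone_at p A"
proof -
  have "\<forall>\<^sub>F t in at_right 0. a \<bullet> (q - p) + t * (a \<bullet> (y - q)) \<le> 0" if a: "a \<in> A" for a
  proof (cases "a \<bullet> (q - p) = 0")
    case True
    then have "a \<bullet> (y - q) = 0"
      using a assms(3) by (auto simp: constraint_flat_def active_constraints_def inner_diff_right)
    with True show ?thesis by simp
  next
    case False
    then have neg: "a \<bullet> (q - p) < 0"
      using a assms(2) by (force simp: polyhedral_cone_at_def)
    have "((\<lambda>t. a \<bullet> (q - p) + t * (a \<bullet> (y - q))) \<longlongrightarrow> a \<bullet> (q - p) + 0 * (a \<bullet> (y - q))) (at_right 0)"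
      by (intro tendsto_intros)
    then have "\<forall>\<^sub>F t in at_right 0. a \<bullet> (q - p) + t * (a \<bullet> (y - q)) < 0"
      using neg by (intro order_tendstoD(2)) auto
    then show ?thesis by (rule eventually_mono) simp
  qed
  then have "\<forall>\<^sub>F t in at_right 0. t > 0 \<and> (\<forall>a\<in>A. a \<bullet> (q - p) + t * (a \<bullet> (y - q)) \<le> 0)"
    using assms(1) by (intro eventually_conj eventually_at_right_less eventually_ball_finite) auto
  then obtain t where "t > 0" "\<forall>a\<in>A. a \<bullet> (q - p) + t * (a \<bullet> (y - q)) \<le> 0"
    using eventually_happens'[OF trivial_limit_at_right_real] by blast
  then show ?thesis
    by (intro exI[of _ t]) (simp add: polyhedral_cone_at_def inner_diff_right algebra_simps)
qed

lemma closest_point_polyhedral_cone_at_eq_active_flat: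
  fixes A :: "'a::euclidean_space set" and p u :: 'a
  assumes "finite A"
  defines "q \<equiv> closest_point (polyhedral_cone_at p A) u"
  shows "closest_point (constraint_flat p (active_constraints p A q)) u = q"
proof (rule closest_point_eqI[OF convex_constraint_flat closed_constraint_flat
      mem_constraint_flat_active_constraints], intro ballI)
  let ?P = "polyhedral_cone_at p A"
  fix y assume "y \<in> constraint_flat p (active_constraints p A q)"
  have "q \<in> ?P"
    unfolding q_def using closest_point_in_set[OF closed_polyhedral_cone_at] base_mem_polyhedral_cone_at
    by blast
  with assms(1) \<open>y \<in> _\<close> obtain t where "t > 0" "q + t *\<^sub>R (y - q) \<in> ?P"
    using polyhedral_cone_at_step_into_active_flat by blast
  then have "(u - q) \<bullet> (q + t *\<^sub>R (y - q) - q) \<le> 0"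
    unfolding q_def by (intro closest_point_dot convex_polyhedral_cone_at closed_polyhedral_cone_at)
  then have "t * ((u - q) \<bullet> (y - q)) \<le> 0" by simp
  with \<open>t > 0\<close> show "(u - q) \<bullet> (y - q) \<le> 0" by (simp add: mult_le_0_iff)
qed

theorem closest_point_polyhedral_cone_at_locally_orthogonal:
  fixes A :: "'a::euclidean_space set"
  assumes "finite A" and p: "closest_point (polyhedral_cone_at p A) \<theta> = p"
  shows "\<exists>r>0. \<forall>u\<in>cball \<theta> r. (closest_point (polyhedral_cone_at p A) u - p) \<bullet> (\<theta> - p) = 0"
proof -
  let ?P = "polyhedral_cone_at p A"
  let ?F = "\<lambda>J. constraint_flat p J"
  have P: "convex ?P" "closed ?P" "?P \<noteq> {}"
    using convex_polyhedral_cone_at closed_polyhedral_cone_at base_mem_polyhedral_cone_at by blast+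
  have F: "convex (?F J)" "closed (?F J)" "?F J \<noteq> {}" for J
    using convex_constraint_flat closed_constraint_flat base_mem_constraint_flat by blast+
  have "finite ((\<lambda>J. closest_point (?F J) \<theta>) ` Pow A)"
    using assms(1) by simp
  then obtain \<delta> where "\<delta> > 0" and \<delta>: "\<And>J. J \<subseteq> A \<Longrightarrow> closest_point (?F J) \<theta> \<noteq> p \<Longrightarrow>
      \<delta> \<le> dist p (closest_point (?F J) \<theta>)"
    using finite_set_avoid[of _ p] by (metis (no_types, lifting) PowI image_eqI)
  show ?thesis
  proof (intro exI[of _ "\<delta> / 3"] conjI ballI)
    fix u assume u: "u \<in> cball \<theta> (\<delta> / 3)"
    define q where "q = closest_point ?P u"
    define J where "J = active_constraints p A q"
    have q: "closest_point (?F J) u = q"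
      unfolding q_def J_def using closest_point_polyhedral_cone_at_eq_active_flat[OF assms(1)] .
    have "dist p q \<le> \<delta> / 3"
      using closest_point_lipschitz[OF P, of \<theta> u] u unfolding q_def p by simp
    moreover have "dist q (closest_point (?F J) \<theta>) \<le> \<delta> / 3"
      using closest_point_lipschitz[OF F, of J u \<theta>] u unfolding q by (simp add: dist_commute)
    ultimately have "dist p (closest_point (?F J) \<theta>) < \<delta>"
      using \<open>\<delta> > 0\<close> dist_triangle[of p "closest_point (?F J) \<theta>" q] by linarith
    then have "closest_point (?F J) \<theta> = p"
      using \<delta>[of J] by (force simp: J_def active_constraints_def)
    moreover have "q \<in> ?F J"
      unfolding J_def by (rule mem_constraint_flat_active_constraints)
    ultimately have "(\<theta> - p) \<bullet> (q - p) = 0"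
      using closest_point_inner_eq_0_if_reflection_mem[OF F(1,2), of q J \<theta>]
        reflection_mem_constraint_flat by metis
    then show "(closest_point ?P u - p) \<bullet> (\<theta> - p) = 0"
      unfolding q_def by (simp add: inner_commute)
  qed (use \<open>\<delta> > 0\<close> in simp)
qed

lemma polyhedral_cone_translate_eq_polyhedral_cone_at:
  fixes T :: "(real ^ 'n) set"
  assumes "polyhedral_cone ((\<lambda>\<theta>. \<theta> - p) ` T)"
  obtains A where "finite A" "T = polyhedral_cone_at p A"
proof -
  obtain rows :: "(real ^ 'n) list" where rows: "(\<lambda>\<theta>. \<theta> - p) ` T = {x. \<forall>a\<in>set rows. a \<bullet> x \<le> 0}"
    using assms unfolding polyhedral_cone_def by blast
  have "y \<in> T \<longleftrightarrow> y - p \<in> (\<lambda>\<theta>. \<theta> - p) ` T" for y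
    by force
  then have "T = polyhedral_cone_at p (set rows)"
    unfolding polyhedral_cone_at_def rows by blast
  then show thesis using that by blast
qed

theorem lemma4:
  fixes \<theta>s :: "real ^ 'n" and T :: "(real ^ 'n) set"
  assumes "T \<noteq> {}" and "closed T" and "convex T"
    and "polyhedral_cone ((\<lambda>\<theta>. \<theta> - closest_point T \<theta>s) ` T)"
  shows "\<exists>r > 0. \<forall>u \<in> cball \<theta>s r.
           (closest_point T u - closest_point T \<theta>s) \<bullet> (\<theta>s - closest_point T \<theta>s) = 0"
proof -
  \<comment> \<open>Nonemptiness, closedness and convexity of \<open>T\<close> follow from its polyhedral form.\<close>
  obtain A where "finite A" and T: "T = polyhedral_cone_at (closest_point T \<theta>s) A"
    using polyhedral_cone_translate_eq_polyhedral_cone_at[OF assms(4)] .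
  have "closest_point (polyhedral_cone_at (closest_point T \<theta>s) A) \<theta>s = closest_point T \<theta>s"
    by (simp flip: T)
  from closest_point_polyhedral_cone_at_locally_orthogonal[OF \<open>finite A\<close> this]
  show ?thesis by (simp flip: T)
qed

end
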